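(* Under the standing setup with Assumptions 1 and 2, let $c^*$ be the optimal consumption function. Then both $w\mapsto c^*(w,z)$ and $w\mapsto i^*(w,z):=w-c^*(w,z)$ are increasing on $(0,\infty)$ for each $z\in\mathsf Z$.
   Context: Standing setup. $\mathsf Z$ finite, $\{Z_t\}$ a time-homogeneous Markov chain on $\mathsf Z$ with transition probabilities $P(z,\hat z)$; $\{\epsilon_t\}_{t\ge1}$ i.i.d. with distribution $\pi$, independent of $\{Z_t\}$; for nonnegative measurable $\beta,R,Y$, $\beta_t=\beta(Z_{t-1},Z_t,\epsilon_t)$, $R_t=R(Z_{t-1},Z_t,\epsilon_t)$, $Y_t=Y(Z_{t-1},Z_t,\epsilon_t)$. $u:(0,\infty)\times\mathsf Z\to\mathbb R$ with derivative $u'(c,z)$ in $c$. $\mathbb E_z$: expectation given $Z_0=z$; under $\mathbb E_z$, $\hat Z=Z_1$, $\hat\beta=\beta(z,\hat Z,\epsilon_1)$, $\hat R=R(z,\hat Z,\epsilon_1)$, $\hat Y=Y(z,\hat Z,\epsilon_1)$. $S_0=(0,\infty)\times\mathsf Z$. Assumption 1: for every $z$, $u(\cdot,z)$ twice differentiable on $(0,\infty)$, $u'>0$, $u''<0$, $u'(c,z)\to\infty$ as $c\to0$, $\lim_{c\to\infty}u'(c,z)<1$. Assumption 2: (a) $\mathbb E_zu'(\hat Y,\hat Z)<\infty$ and $\mathbb E_z\hat\beta\hat Ru'(\hat Y,\hat Z)<\infty$ for all $z$; (b) $r(K(1))<1$ ($r$ = spectral radius), where $K_{z\hat z}(\theta)=P(z,\hat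 z)\int\beta(z,\hat z,\epsilon)R(z,\hat z,\epsilon)^\theta\pi(d\epsilon)$. $\mathcal C$: continuous $c:S_0\to\mathbb R_+$, increasing in $w$, $0<c(w,z)\le w$, with $\sup_{S_0}|u'(c(w,z),z)-u'(w,z)|<\infty$. $T$: $Tc(w,z)$ is the unique $\xi\in(0,w]$ with $u'(\xi,z)=\max\{\mathbb E_z\hat\beta\hat Ru'(c(\hat R(w-\xi)+\hat Y,\hat Z),\hat Z),u'(w,z)\}$. The optimal consumption function $c^*$ is the unique fixed point of $T$ in $\mathcal C$. *)

theory Defs
  imports "HOL-Probability.Probability"
begin

definition condE :: "('z::finite \<Rightarrow> 'z \<Rightarrow> real) \<Rightarrow> 'e measure \<Rightarrow> 'z \<Rightarrow> ('z \<Rightarrow> 'e \<Rightarrow> ennreal) \<Rightarrow> ennreal" where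
  "condE P Pe z g = (\<Sum>zh\<in>UNIV. ennreal (P z zh) * (\<integral>\<^sup>+ e. g zh e \<partial>Pe))"

text \<open>Marginal utility extended to [0,infinity]: u'(x,z) for x>0, and +infinity for x \<le> 0
  (the limit as c -> 0 under Assumption 1).\<close>
definition mu :: "(real \<Rightarrow> 'z \<Rightarrow> real) \<Rightarrow> real \<Rightarrow> 'z \<Rightarrow> ennreal" where
  "mu du x z = (if 0 < x then ennreal (du x z) else \<infinity>)"

text \<open>A consumption function is only defined on S_0 = (0,infinity) x Z; off S_0 we send it to 0.\<close>
definition cext :: "(real \<Rightarrow> 'z \<Rightarrow> real) \<Rightarrow> real \<Rightarrow> 'z \<Rightarrow> real" where
  "cext c x z = (if 0 < x then c x z else 0)"

definition classC :: "(real \<Rightarrow> 'z \<Rightarrow> real) \<Rightarrow> (real \<Rightarrow> 'z \<Rightarrow> real) set" where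
  "classC du = {c. (\<forall>z. continuous_on {0<..} (\<lambda>w. c w z))
      \<and> (\<forall>z. mono_on {0<..} (\<lambda>w. c w z))
      \<and> (\<forall>w>0. \<forall>z. 0 < c w z \<and> c w z \<le> w)
      \<and> (\<exists>M. \<forall>w>0. \<forall>z. \<bar>du (c w z) z - du w z\<bar> \<le> M)}"

definition Top :: "('z::finite \<Rightarrow> 'z \<Rightarrow> real) \<Rightarrow> 'e measure \<Rightarrow>
    ('z \<Rightarrow> 'z \<Rightarrow> 'e \<Rightarrow> real) \<Rightarrow> ('z \<Rightarrow> 'z \<Rightarrow> 'e \<Rightarrow> real) \<Rightarrow> ('z \<Rightarrow> 'z \<Rightarrow> 'e \<Rightarrow> real) \<Rightarrow>
    (real \<Rightarrow> 'z \<Rightarrow> real) \<Rightarrow> (real \<Rightarrow> 'z \<Rightarrow> real) \<Rightarrow> real \<Rightarrow> 'z \<Rightarrow> real" where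
  "Top P Pe \<beta> R Y du c w z =
     (THE \<xi>. 0 < \<xi> \<and> \<xi> \<le> w \<and>
        ennreal (du \<xi> z) =
          max (condE P Pe z (\<lambda>zh e. ennreal (\<beta> z zh e * R z zh e) *
                   mu du (cext c (R z zh e * (w - \<xi>) + Y z zh e) zh) zh))
              (ennreal (du w z)))"

definition spec_radius :: "('n::finite \<Rightarrow> 'n \<Rightarrow> real) \<Rightarrow> real" where
  "spec_radius A = Sup {cmod l | l. \<exists>v::'n \<Rightarrow> complex. (\<exists>j. v j \<noteq> 0) \<and>
       (\<forall>i. (\<Sum>j\<in>UNIV. complex_of_real (A i j) * v j) = l * v i)}"

definition K1 :: "('z::finite \<Rightarrow> 'z \<Rightarrow> real) \<Rightarrow> 'e measure \<Rightarrow>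
    ('z \<Rightarrow> 'z \<Rightarrow> 'e \<Rightarrow> real) \<Rightarrow> ('z \<Rightarrow> 'z \<Rightarrow> 'e \<Rightarrow> real) \<Rightarrow> 'z \<Rightarrow> 'z \<Rightarrow> real" where
  "K1 P Pe \<beta> R z zh = enn2real (ennreal (P z zh) * (\<integral>\<^sup>+ e. ennreal (\<beta> z zh e * R z zh e) \<partial>Pe))"

end

theory Submission
  imports Defs
begin

text \<open>Write \<open>i = w - \<xi>\<close> for the investment corresponding to consumption \<open>\<xi>\<close>. The right-hand side
  \<open>H(i) = \<bbbE>\<^sub>z \<beta>R u'(c(Ri + Y))\<close> of the Euler equation defining \<open>T\<close> is nonincreasing in \<open>i\<close>,
  because \<open>c\<close> is increasing and \<open>u'\<close> decreasing. If investment fell while wealth rose, then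
  consumption would rise strictly, so \<open>u'(c)\<close> would fall strictly, while \<open>H(i)\<close> would weakly rise;
  the Euler equation rules this out. Because \<open>T\<close> is a definite description, the Euler
  equation must first be shown to have exactly one root: uniqueness comes from the same
  monotonicity, existence from the intermediate value theorem: \<open>H\<close> is finite on \<open>[0, \<infinity>)\<close> by
  Assumption 2(a) and the bound on \<open>u'(c(w)) - u'(w)\<close> in the definition of \<open>\<C>\<close>, hence
  continuous there by monotone convergence from either side.\<close>

lemma continuous_on_enn2real:
  assumes "continuous_on S f" "\<And>x. x \<in> S \<Longrightarrow> f x < \<infinity>"
  shows "continuous_on S (\<lambda>x. enn2real (f x))"
  unfolding continuous_on_def
proof
  fix x assume "x \<in> S"
  then have "(f \<longlongrightarrow> ennreal (enn2real (f x))) (at x within S)"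
    using assms by (simp add: continuous_on_def)
  then show "((\<lambda>x. enn2real (f x)) \<longlongrightarrow> enn2real (f x)) (at x within S)"
    by (intro tendsto_enn2real) auto
qed

locale time_iteration =
  fixes P :: "'z::finite \<Rightarrow> 'z \<Rightarrow> real"
    and Pe :: "'e measure"
    and \<beta> R Y :: "'z \<Rightarrow> 'z \<Rightarrow> 'e \<Rightarrow> real"
    and du d2u :: "real \<Rightarrow> 'z \<Rightarrow> real"
    and c :: "real \<Rightarrow> 'z \<Rightarrow> real"
  assumes P_nonneg: "\<And>z zh. 0 \<le> P z zh"
    and \<beta>_nonneg: "\<And>z zh e. 0 \<le> \<beta> z zh e"
    and R_nonneg: "\<And>z zh e. 0 \<le> R z zh e"
    and Y_nonneg: "\<And>z zh e. 0 \<le> Y z zh e"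
    and \<beta>_meas [measurable]: "\<And>z zh. (\<lambda>e. \<beta> z zh e) \<in> borel_measurable Pe"
    and R_meas [measurable]: "\<And>z zh. (\<lambda>e. R z zh e) \<in> borel_measurable Pe"
    and Y_meas [measurable]: "\<And>z zh. (\<lambda>e. Y z zh e) \<in> borel_measurable Pe"
    and du_deriv: "\<And>z x. 0 < x \<Longrightarrow> ((\<lambda>x. du x z) has_real_derivative d2u x z) (at x)"
    and du_pos: "\<And>z x. 0 < x \<Longrightarrow> 0 < du x z"
    and d2u_neg: "\<And>z x. 0 < x \<Longrightarrow> d2u x z < 0"
    and du_at_0: "\<And>z. filterlim (\<lambda>x. du x z) at_top (at_right 0)"
    and discounted_mu_Y_finite: "\<And>z. condE P Pe z (\<lambda>zh e. ennreal (\<beta> z zh e * R z zh e) * mu du (Y z zh e) zh) < \<infinity>"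
    and K1_finite: "\<And>z zh. ennreal (P z zh) * (\<integral>\<^sup>+ e. ennreal (\<beta> z zh e * R z zh e) \<partial>Pe) < \<infinity>"
    and c_classC: "c \<in> classC du"
begin

lemma du_less: "0 < a \<Longrightarrow> a < b \<Longrightarrow> du b z < du a z"
  by (rule DERIV_neg_imp_decreasing[of a b "\<lambda>x. du x z"])
     (use du_deriv d2u_neg in \<open>meson less_le_trans\<close>)+

lemma du_le_iff: "0 < a \<Longrightarrow> 0 < b \<Longrightarrow> du a z \<le> du b z \<longleftrightarrow> b \<le> a"
  using du_less[of a b z] du_less[of b a z] by (cases a b rule: linorder_cases) auto

lemma isCont_du: "0 < x \<Longrightarrow> isCont (\<lambda>x. du x z) x"
  using DERIV_isCont du_deriv by blast

lemma c_pos: "0 < w \<Longrightarrow> 0 < c w z"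
  and c_le: "0 < w \<Longrightarrow> c w z \<le> w"
  and c_mono: "0 < x \<Longrightarrow> x \<le> y \<Longrightarrow> c x z \<le> c y z"
  and continuous_on_c: "continuous_on {0<..} (\<lambda>w. c w z)"
  using c_classC by (auto simp: classC_def mono_on_def)

lemma du_c_bounded: obtains M where "0 \<le> M" "\<And>w z. 0 < w \<Longrightarrow> du (c w z) z \<le> du w z + M"
proof -
  obtain M where M: "\<forall>w>0. \<forall>z. \<bar>du (c w z) z - du w z\<bar> \<le> M"
    using c_classC unfolding classC_def by auto
  then have "0 \<le> M" by (meson abs_ge_zero order_trans zero_less_one)
  show thesis
  proof (rule that)
    show "0 \<le> M" by fact
    show "du (c w z) z \<le> du w z + M" if "0 < w" for w z
      using M[rule_format, OF that, of z] by linarith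
  qed
qed

lemma isCont_du_c: "0 < x \<Longrightarrow> isCont (\<lambda>x. du (c x z) z) x"
  using continuous_on_c[of z] c_pos[of x z]
  by (intro continuous_at_compose[unfolded o_def, OF _ isCont_du])
     (auto simp: continuous_on_eq_continuous_at)

lemma mu_measurable [measurable]: "(\<lambda>x. mu du x z) \<in> borel_measurable borel"
proof -
  have "continuous_on {0<..} (\<lambda>x. ennreal (du x z))"
    using isCont_du by (intro continuous_on_ennreal continuous_at_imp_continuous_on) auto
  then have "(\<lambda>x. if x \<in> {0<..} then ennreal (du x z) else \<infinity>) \<in> borel_measurable borel"
    by (intro borel_measurable_continuous_on_if) auto
  then show ?thesis by (simp add: mu_def[abs_def])
qed

definition mc :: "real \<Rightarrow> 'z \<Rightarrow> ennreal" where
  "mc x z = mu du (cext c x z) z"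

lemma mc_eq: "mc x z = (if 0 < x then ennreal (du (c x z) z) else \<infinity>)"
  using c_pos[of x z] by (auto simp: mc_def mu_def cext_def)

lemma mc_antimono: "x \<le> y \<Longrightarrow> mc y z \<le> mc x z"
  using c_mono[of x y z] c_pos[of x z] du_le_iff[of "c y z" "c x z" z]
  by (auto simp: mc_eq intro: ennreal_leI)

lemma mc_measurable [measurable]: "(\<lambda>x. mc x z) \<in> borel_measurable borel"
proof -
  have "continuous_on {0<..} (\<lambda>x. ennreal (du (c x z) z))"
    using isCont_du_c by (intro continuous_on_ennreal continuous_at_imp_continuous_on) auto
  then have "(\<lambda>x. if x \<in> {0<..} then ennreal (du (c x z) z) else \<infinity>) \<in> borel_measurable borel"
    by (intro borel_measurable_continuous_on_if) auto
  then show ?thesis by (simp add: mc_eq[abs_def])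
qed

lemma mc_at_right_0: "((\<lambda>x. mc x z) \<longlongrightarrow> \<infinity>) (at_right 0)"
proof -
  have "filterlim (\<lambda>x. c x z) (at_right 0) (at_right 0)"
    unfolding filterlim_at
  proof
    show "\<forall>\<^sub>F x in at_right 0. c x z \<in> {0<..} \<and> c x z \<noteq> 0"
      using eventually_at_right_less[of 0] by eventually_elim (auto dest: c_pos[of _ z])
    show "((\<lambda>x. c x z) \<longlongrightarrow> 0) (at_right 0)"
      by (rule tendsto_sandwich[of "\<lambda>_. 0" _ _ "\<lambda>x. x"])
         (auto simp: eventually_at_right_field c_le less_imp_le[OF c_pos] intro!: exI[of _ 1])
  qed
  then have "((\<lambda>x. ennreal (du (c x z) z)) \<longlongrightarrow> \<infinity>) (at_right 0)"
    using filterlim_compose[OF du_at_0] by (simp add: ennreal_tendsto_top_eq_at_top)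
  then show ?thesis
    by (rule tendsto_cong[THEN iffD1, rotated])
       (auto simp: mc_eq eventually_at_right_field intro: exI[of _ 1])
qed

lemma continuous_on_mc: "continuous_on {0..} (\<lambda>x. mc x z)"
  unfolding continuous_on_eq_continuous_within
proof
  fix x :: real assume "x \<in> {0..}"
  then consider "0 < x" | "x = 0" by fastforce
  then show "continuous (at x within {0..}) (\<lambda>x. mc x z)"
  proof cases
    case 1
    have "continuous_on {0<..} (\<lambda>x. ennreal (du (c x z) z))"
      using isCont_du_c by (intro continuous_on_ennreal continuous_at_imp_continuous_on) auto
    then have "continuous_on {0<..} (\<lambda>x. mc x z)"
      by (rule continuous_on_cong[THEN iffD1, rotated 2]) (auto simp: mc_eq)
    then show ?thesis
      using 1 by (auto simp: continuous_on_eq_continuous_at intro: continuous_at_imp_continuous_within)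
  next
    case 2
    then show ?thesis
      using mc_at_right_0 by (simp add: continuous_within at_within_Ici_at_right mc_eq)
  qed
qed

definition next_mu :: "'z \<Rightarrow> 'z \<Rightarrow> real \<Rightarrow> 'e \<Rightarrow> ennreal" where
  "next_mu z zh i e = ennreal (\<beta> z zh e * R z zh e) * mc (R z zh e * i + Y z zh e) zh"

definition next_mu_mix :: "'z \<Rightarrow> real \<Rightarrow> 'e \<Rightarrow> ennreal" where
  "next_mu_mix z i e = (\<Sum>zh\<in>UNIV. ennreal (P z zh) * next_mu z zh i e)"

text \<open>\<open>expected_mu z i\<close> is the paper's \<open>\<bbbE>\<^sub>z \<hat>\<beta>\<hat>R u'(c(\<hat>R i + \<hat>Y), \<hat>Z)\<close>, the first argument of the
  \<open>max\<close> in the definition of \<open>T\<close>, as a function of investment \<open>i = w - \<xi>\<close>.\<close>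
definition expected_mu :: "'z \<Rightarrow> real \<Rightarrow> ennreal" where
  "expected_mu z i = condE P Pe z (\<lambda>zh. next_mu z zh i)"

lemma next_mu_measurable [measurable]: "next_mu z zh i \<in> borel_measurable Pe"
  unfolding next_mu_def[abs_def] by measurable

lemma next_mu_mix_measurable [measurable]: "next_mu_mix z i \<in> borel_measurable Pe"
  unfolding next_mu_mix_def[abs_def] by measurable

lemma expected_mu_eq_nn_integral: "expected_mu z i = (\<integral>\<^sup>+ e. next_mu_mix z i e \<partial>Pe)"
  unfolding expected_mu_def condE_def next_mu_mix_def
  by (subst nn_integral_sum) (auto simp: nn_integral_cmult)

lemma next_mu_mix_antimono: "i \<le> i' \<Longrightarrow> next_mu_mix z i' e \<le> next_mu_mix z i e"
  unfolding next_mu_mix_def next_mu_def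
  by (intro sum_mono mult_left_mono mc_antimono add_right_mono) (auto simp: R_nonneg)

lemma expected_mu_antimono: "i \<le> i' \<Longrightarrow> expected_mu z i' \<le> expected_mu z i"
  unfolding expected_mu_eq_nn_integral by (intro nn_integral_mono next_mu_mix_antimono)

lemma next_mu_mix_tendsto:
  assumes "\<And>n. 0 \<le> is n" "is \<longlonglongrightarrow> i"
  shows "(\<lambda>n. next_mu_mix z (is n) e) \<longlonglongrightarrow> next_mu_mix z i e"
proof -
  have "(\<lambda>n. mc (R z zh e * is n + Y z zh e) zh) \<longlonglongrightarrow> mc (R z zh e * i + Y z zh e) zh" for zh
  proof (rule continuous_on_tendsto_compose[OF continuous_on_mc])
    show "(\<lambda>n. R z zh e * is n + Y z zh e) \<longlonglongrightarrow> R z zh e * i + Y z zh e"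
      by (intro tendsto_intros assms)
    have "0 \<le> i" using assms by (intro LIMSEQ_le_const) auto
    then show "R z zh e * i + Y z zh e \<in> {0..}"
      by (simp add: R_nonneg Y_nonneg)
  qed (use assms R_nonneg Y_nonneg in auto)
  then show ?thesis
    unfolding next_mu_mix_def next_mu_def by (intro tendsto_sum ennreal_tendsto_cmult) auto
qed

lemma expected_mu_0_finite: "expected_mu z 0 < \<infinity>"
proof -
  obtain M where M: "0 \<le> M" "\<And>w z. 0 < w \<Longrightarrow> du (c w z) z \<le> du w z + M"
    using du_c_bounded by blast
  let ?\<beta>R = "\<lambda>zh e. ennreal (\<beta> z zh e * R z zh e)"
  have "ennreal (P z zh) * (\<integral>\<^sup>+ e. next_mu z zh 0 e \<partial>Pe) < \<infinity>" for zh
  proof -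
    have "mc (Y z zh e) zh \<le> mu du (Y z zh e) zh + ennreal M" for e
    proof (cases "0 < Y z zh e")
      case True
      then have "ennreal (du (c (Y z zh e) zh) zh) \<le> ennreal (du (Y z zh e) zh + M)"
        using M(2) by (intro ennreal_leI) auto
      then show ?thesis
        using True du_pos[OF True, of zh] M(1) by (simp add: mc_eq mu_def)
    qed (simp add: mc_eq mu_def)
    then have "(\<integral>\<^sup>+ e. next_mu z zh 0 e \<partial>Pe)
        \<le> (\<integral>\<^sup>+ e. ?\<beta>R zh e * mu du (Y z zh e) zh + ?\<beta>R zh e * ennreal M \<partial>Pe)"
      unfolding next_mu_def by (intro nn_integral_mono) (simp add: distrib_left[symmetric] mult_left_mono)
    also have "\<dots> = (\<integral>\<^sup>+ e. ?\<beta>R zh e * mu du (Y z zh e) zh \<partial>Pe) + (\<integral>\<^sup>+ e. ?\<beta>R zh e \<partial>Pe) * ennreal M"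
      by (subst nn_integral_add) (auto simp: nn_integral_multc)
    finally have "ennreal (P z zh) * (\<integral>\<^sup>+ e. next_mu z zh 0 e \<partial>Pe)
        \<le> ennreal (P z zh) * (\<integral>\<^sup>+ e. ?\<beta>R zh e * mu du (Y z zh e) zh \<partial>Pe)
          + ennreal (P z zh) * (\<integral>\<^sup>+ e. ?\<beta>R zh e \<partial>Pe) * ennreal M"
      by (subst mult.assoc, subst distrib_left[symmetric]) (rule mult_left_mono, auto)
    moreover have "ennreal (P z zh) * (\<integral>\<^sup>+ e. ?\<beta>R zh e * mu du (Y z zh e) zh \<partial>Pe) < \<infinity>"
      using discounted_mu_Y_finite[of z] unfolding condE_def by (simp add: top.not_eq_extremum)
    moreover have "ennreal (P z zh) * (\<integral>\<^sup>+ e. ?\<beta>R zh e \<partial>Pe) * ennreal M < \<infinity>"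
      using K1_finite[of z zh] by (simp add: ennreal_mult_less_top)
    ultimately show ?thesis by (simp add: order_le_less_trans)
  qed
  then show ?thesis unfolding expected_mu_def condE_def by simp
qed

lemma expected_mu_tendsto_incseq:
  assumes "incseq is" "\<And>n. 0 \<le> is n" "is \<longlonglongrightarrow> i"
  shows "(\<lambda>n. expected_mu z (is n)) \<longlonglongrightarrow> expected_mu z i"
proof -
  have "decseq (\<lambda>n. next_mu_mix z (is n))"
    using assms(1) unfolding incseq_def decseq_def monotone_def le_fun_def
    by (auto intro: next_mu_mix_antimono)
  moreover have "(\<integral>\<^sup>+ e. next_mu_mix z (is n) e \<partial>Pe) < \<infinity>" for n
    using expected_mu_antimono[OF assms(2)] expected_mu_0_finite
    by (auto simp: expected_mu_eq_nn_integral[symmetric] intro: le_less_trans)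
  ultimately have "(\<integral>\<^sup>+ e. (INF n. next_mu_mix z (is n) e) \<partial>Pe) = (INF n. expected_mu z (is n))"
    unfolding expected_mu_eq_nn_integral by (intro nn_integral_monotone_convergence_INF_decseq) auto
  moreover have "(INF n. next_mu_mix z (is n) e) = next_mu_mix z i e" for e
  proof (rule LIMSEQ_unique[OF LIMSEQ_INF])
    show "decseq (\<lambda>n. next_mu_mix z (is n) e)"
      using assms(1) by (auto simp: incseq_def decseq_def intro: next_mu_mix_antimono)
  qed (rule next_mu_mix_tendsto[OF assms(2,3)])
  moreover have "decseq (\<lambda>n. expected_mu z (is n))"
    using assms(1) by (auto simp: incseq_def decseq_def intro: expected_mu_antimono)
  ultimately show ?thesis
    using LIMSEQ_INF by (fastforce simp: expected_mu_eq_nn_integral)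
qed

lemma expected_mu_tendsto_decseq:
  assumes "decseq is" "0 \<le> i" "is \<longlonglongrightarrow> i"
  shows "(\<lambda>n. expected_mu z (is n)) \<longlonglongrightarrow> expected_mu z i"
proof -
  have is_nonneg: "0 \<le> is n" for n
    using decseq_ge[OF assms(1,3), of n] assms(2) by linarith
  have "incseq (\<lambda>n. next_mu_mix z (is n))"
    using assms(1) unfolding incseq_def decseq_def monotone_def le_fun_def
    by (auto intro: next_mu_mix_antimono)
  then have "(\<integral>\<^sup>+ e. (SUP n. next_mu_mix z (is n) e) \<partial>Pe) = (SUP n. expected_mu z (is n))"
    unfolding expected_mu_eq_nn_integral by (intro nn_integral_monotone_convergence_SUP) auto
  moreover have "(SUP n. next_mu_mix z (is n) e) = next_mu_mix z i e" for e
  proof (rule LIMSEQ_unique[OF LIMSEQ_SUP])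
    show "incseq (\<lambda>n. next_mu_mix z (is n) e)"
      using assms(1) by (auto simp: incseq_def decseq_def intro: next_mu_mix_antimono)
  qed (rule next_mu_mix_tendsto[OF is_nonneg assms(3)])
  moreover have "incseq (\<lambda>n. expected_mu z (is n))"
    using assms(1) by (auto simp: incseq_def decseq_def intro: expected_mu_antimono)
  ultimately show ?thesis
    using LIMSEQ_SUP by (fastforce simp: expected_mu_eq_nn_integral)
qed

lemma continuous_on_expected_mu: "continuous_on {0..} (expected_mu z)"
  unfolding continuous_on_eq_continuous_within continuous_within
proof
  fix i :: real assume i: "i \<in> {0..}"
  have right: "(expected_mu z \<longlongrightarrow> expected_mu z i) (at_right i)"
    by (rule tendsto_at_right_sequentially[of i "i + 1"])
       (use i in \<open>auto intro: expected_mu_tendsto_decseq\<close>)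
  show "(expected_mu z \<longlongrightarrow> expected_mu z i) (at i within {0..})"
  proof (cases "i = 0")
    case True
    with right show ?thesis by (simp add: at_within_Ici_at_right)
  next
    case False
    with i have "0 < i" by simp
    have "(expected_mu z \<longlongrightarrow> expected_mu z i) (at_left i)"
      by (rule tendsto_at_left_sequentially[OF \<open>0 < i\<close>])
         (auto intro: expected_mu_tendsto_incseq less_imp_le)
    moreover have "{0..} = {0..i} \<union> {i..}" using i by auto
    ultimately show ?thesis
      using right \<open>0 < i\<close> by (simp add: Lim_within_Un at_within_Icc_at_left at_within_Ici_at_right)
  qed
qed

definition euler_eq :: "'z \<Rightarrow> real \<Rightarrow> real \<Rightarrow> bool" where
  "euler_eq z w \<xi> \<longleftrightarrow>
     0 < \<xi> \<and> \<xi> \<le> w \<and> ennreal (du \<xi> z) = max (expected_mu z (w - \<xi>)) (ennreal (du w z))"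

lemma Top_eq_The_euler_eq: "Top P Pe \<beta> R Y du c w z = (THE \<xi>. euler_eq z w \<xi>)"
  unfolding Top_def euler_eq_def expected_mu_def next_mu_def mc_def by simp

lemma euler_eq_not_less:
  assumes "euler_eq z w a" "euler_eq z w b" shows "\<not> a < b"
proof
  assume "a < b"
  then have "max (expected_mu z (w - a)) (ennreal (du w z)) \<le> max (expected_mu z (w - b)) (ennreal (du w z))"
    by (intro max.mono expected_mu_antimono) auto
  then have "ennreal (du a z) \<le> ennreal (du b z)"
    using assms unfolding euler_eq_def by metis
  moreover have "0 < a" "0 < b"
    using assms by (simp_all add: euler_eq_def)
  ultimately have "du a z \<le> du b z"
    using du_pos[of b z] by simp
  with du_less[of a b z] \<open>a < b\<close> \<open>0 < a\<close> show False by simp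
qed

lemma euler_eq_unique: "euler_eq z w a \<Longrightarrow> euler_eq z w b \<Longrightarrow> a = b"
  using euler_eq_not_less by (meson linorder_neqE_linordered_idom)

lemma euler_eq_exists:
  assumes "0 < w" shows "\<exists>\<xi>. euler_eq z w \<xi>"
proof (cases "expected_mu z 0 \<le> ennreal (du w z)")
  case True
  then show ?thesis
    using \<open>0 < w\<close> by (intro exI[of _ w]) (simp add: euler_eq_def max_def)
next
  case False
  obtain B where B: "expected_mu z 0 = ennreal B" "0 \<le> B"
    using expected_mu_0_finite[of z] by (cases "expected_mu z 0") auto
  have "\<forall>\<^sub>F x in at_right 0. B \<le> du x z"
    using du_at_0[of z] by (simp add: filterlim_at_top)
  then obtain b where b: "0 < b" "\<And>x. 0 < x \<Longrightarrow> x < b \<Longrightarrow> B \<le> du x z"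
    unfolding eventually_at_right_field by auto
  define a where "a = min (b / 2) w"
  have a: "0 < a" "a \<le> w" "B \<le> du a z"
    using b \<open>0 < w\<close> by (auto simp: a_def)
  define f where "f \<xi> = enn2real (expected_mu z (w - \<xi>)) - du \<xi> z" for \<xi>
  have "enn2real (expected_mu z (w - a)) \<le> enn2real (expected_mu z 0)"
    using a expected_mu_0_finite by (intro enn2real_mono expected_mu_antimono) auto
  then have "f a \<le> 0"
    using a B by (simp add: f_def)
  moreover have "0 \<le> f w"
    using False B du_pos[OF \<open>0 < w\<close>, of z] by (simp add: f_def not_le ennreal_less_iff)
  moreover have "continuous_on {a..w} f"
    unfolding f_def
  proof (intro continuous_on_diff continuous_on_enn2real)
    show "continuous_on {a..w} (\<lambda>\<xi>. expected_mu z (w - \<xi>))"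
      by (intro continuous_on_compose2[OF continuous_on_expected_mu] continuous_on_diff
          continuous_on_const continuous_on_id) auto
    show "expected_mu z (w - \<xi>) < \<infinity>" if "\<xi> \<in> {a..w}" for \<xi>
      using that expected_mu_antimono[of 0 "w - \<xi>" z] expected_mu_0_finite[of z] by auto
    show "continuous_on {a..w} (\<lambda>\<xi>. du \<xi> z)"
      using a isCont_du by (intro continuous_at_imp_continuous_on) auto
  qed
  ultimately obtain \<xi> where \<xi>: "a \<le> \<xi>" "\<xi> \<le> w" "f \<xi> = 0"
    using IVT'[of f a 0 w] a by auto
  then have "expected_mu z (w - \<xi>) = ennreal (du \<xi> z)"
    using expected_mu_antimono[of 0 "w - \<xi>" z] expected_mu_0_finite[of z]
    by (subst ennreal_enn2real[symmetric]) (auto simp: f_def)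
  moreover have "ennreal (du w z) \<le> ennreal (du \<xi> z)"
    using \<xi> a du_le_iff[of w \<xi> z] by (intro ennreal_leI) auto
  ultimately show ?thesis
    using \<xi> a by (intro exI[of _ \<xi>]) (auto simp: euler_eq_def max_absorb1)
qed

lemma euler_eq_Top: "0 < w \<Longrightarrow> euler_eq z w (Top P Pe \<beta> R Y du c w z)"
  unfolding Top_eq_The_euler_eq
  by (rule theI') (use euler_eq_exists euler_eq_unique in blast)

lemma euler_eq_investment_mono:
  assumes eq1: "euler_eq z w1 \<xi>1" and eq2: "euler_eq z w2 \<xi>2" and "w1 \<le> w2"
  shows "w1 - \<xi>1 \<le> w2 - \<xi>2"
proof (rule ccontr)
  assume "\<not> ?thesis"
  then have less: "w2 - \<xi>2 < w1 - \<xi>1" and "\<xi>1 < \<xi>2"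
    using \<open>w1 \<le> w2\<close> by linarith+
  have pos: "0 < \<xi>1" "0 < \<xi>2" "\<xi>1 \<le> w1" "\<xi>2 \<le> w2"
    using eq1 eq2 by (simp_all add: euler_eq_def)
  show False
  proof (cases "expected_mu z (w1 - \<xi>1) \<le> ennreal (du w1 z)")
    case True
    then have "ennreal (du \<xi>1 z) = ennreal (du w1 z)"
      using eq1 by (simp add: euler_eq_def max_absorb2)
    then have "du \<xi>1 z = du w1 z"
      using du_pos[of \<xi>1 z] du_pos[of w1 z] pos by simp
    then have "\<xi>1 = w1"
      using du_less[of \<xi>1 w1 z] pos by (cases "\<xi>1 < w1") auto
    with less pos show False by linarith
  next
    case False
    then have "ennreal (du \<xi>1 z) = expected_mu z (w1 - \<xi>1)"
      using eq1 by (simp add: euler_eq_def max_def)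
    also have "\<dots> \<le> expected_mu z (w2 - \<xi>2)"
      using less by (intro expected_mu_antimono) simp
    also have "\<dots> \<le> ennreal (du \<xi>2 z)"
      using eq2 by (simp add: euler_eq_def)
    finally have "du \<xi>1 z \<le> du \<xi>2 z"
      using du_pos[of \<xi>2 z] pos by (simp add: ennreal_le_iff)
    with du_less[of \<xi>1 \<xi>2 z] pos \<open>\<xi>1 < \<xi>2\<close> show False by simp
  qed
qed

end

theorem proposition2p2:
  fixes P :: "'z::finite \<Rightarrow> 'z \<Rightarrow> real"
    and Pe :: "'e measure"
    and \<beta> R Y :: "'z \<Rightarrow> 'z \<Rightarrow> 'e \<Rightarrow> real"
    and u du d2u :: "real \<Rightarrow> 'z \<Rightarrow> real"
    and cstar :: "real \<Rightarrow> 'z \<Rightarrow> real"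
  assumes P_nonneg: "\<And>z zh. 0 \<le> P z zh"
    and P_stoch: "\<And>z. (\<Sum>zh\<in>UNIV. P z zh) = 1"
    and pi_prob: "prob_space Pe"
    and \<beta>_nonneg: "\<And>z zh e. 0 \<le> \<beta> z zh e"
    and R_nonneg: "\<And>z zh e. 0 \<le> R z zh e"
    and Y_nonneg: "\<And>z zh e. 0 \<le> Y z zh e"
    and \<beta>_meas: "\<And>z zh. (\<lambda>e. \<beta> z zh e) \<in> borel_measurable Pe"
    and R_meas: "\<And>z zh. (\<lambda>e. R z zh e) \<in> borel_measurable Pe"
    and Y_meas: "\<And>z zh. (\<lambda>e. Y z zh e) \<in> borel_measurable Pe"
    \<comment> \<open>Assumption 1\<close>
    and u_deriv: "\<And>z c. 0 < c \<Longrightarrow> ((\<lambda>x. u x z) has_real_derivative du c z) (at c)"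
    and du_deriv: "\<And>z c. 0 < c \<Longrightarrow> ((\<lambda>x. du x z) has_real_derivative d2u c z) (at c)"
    and du_pos: "\<And>z c. 0 < c \<Longrightarrow> 0 < du c z"
    and d2u_neg: "\<And>z c. 0 < c \<Longrightarrow> d2u c z < 0"
    and du_zero: "\<And>z. filterlim (\<lambda>c. du c z) at_top (at_right 0)"
    and du_infty: "\<And>z. \<exists>L. ((\<lambda>c. du c z) \<longlongrightarrow> L) at_top \<and> L < 1"
    \<comment> \<open>Assumption 2(a)\<close>
    and A2a1: "\<And>z. condE P Pe z (\<lambda>zh e. mu du (Y z zh e) zh) < \<infinity>"
    and A2a2: "\<And>z. condE P Pe z (\<lambda>zh e. ennreal (\<beta> z zh e * R z zh e) * mu du (Y z zh e) zh) < \<infinity>"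
    \<comment> \<open>K(1) is a (finite) real matrix, and Assumption 2(b)\<close>
    and K1_finite: "\<And>z zh. ennreal (P z zh) * (\<integral>\<^sup>+ e. ennreal (\<beta> z zh e * R z zh e) \<partial>Pe) < \<infinity>"
    and A2b: "spec_radius (K1 P Pe \<beta> R) < 1"
    \<comment> \<open>c* is the optimal consumption function: the fixed point of T in C\<close>
    and cstar_C: "cstar \<in> classC du"
    and cstar_fix: "\<And>w z. 0 < w \<Longrightarrow> Top P Pe \<beta> R Y du cstar w z = cstar w z"
  shows "\<forall>z. mono_on {0<..} (\<lambda>w. cstar w z) \<and> mono_on {0<..} (\<lambda>w. w - cstar w z)"
proof
  fix z
  interpret time_iteration P Pe \<beta> R Y du d2u cstar
    by unfold_locales (use assms in auto)
  have "euler_eq z w (cstar w z)" if "0 < w" for w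
    using euler_eq_Top[OF that, of z] cstar_fix[OF that] by simp
  then have "mono_on {0<..} (\<lambda>w. w - cstar w z)"
    by (intro mono_onI euler_eq_investment_mono) auto
  moreover have "mono_on {0<..} (\<lambda>w. cstar w z)"
    using cstar_C by (simp add: classC_def)
  ultimately show "mono_on {0<..} (\<lambda>w. cstar w z) \<and> mono_on {0<..} (\<lambda>w. w - cstar w z)"
    by blast
qed

end
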